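(* Let $\kappa=[2\ell-1]$ with $\ell\in\mathbb Z$. Then $\mathfrak g^{(n)}(\kappa)\in\mathbb Z[q,q^{-1}]$ for all $n\in\mathbb N$.
   Context: $q$ is an indeterminate, $[n]=\frac{q^n-q^{-n}}{q-q^{-1}}$ for $n\in\mathbb Z$, $[n]!=[1]\cdots[n]$, $[0]!=1$. The polynomials $\mathfrak g_n(x)$ are $\mathfrak g_{2m}(x)=\prod_{i=1}^{m}(x^2-[2i-1]^2)$ and $\mathfrak g_{2m+1}(x)=x\prod_{i=1}^m(x^2-[2i-1]^2)$, and $\mathfrak g^{(n)}=\mathfrak g_n/[n]!$. *)

theory Defs
  imports "HOL-Computational_Algebra.Polynomial" "HOL-Computational_Algebra.Fraction_Field"
begin

text \<open>We work in the field of rational functions Q(q), realised as the fraction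
field of Z[q]; q is the indeterminate.\<close>

type_synonym qfun = "int poly fract"

definition qvar :: qfun where
  "qvar = Fract [:0, 1:] 1"

definition qint :: "int \<Rightarrow> qfun" where
  "qint n = (qvar powi n - qvar powi (- n)) / (qvar - inverse qvar)"

definition qfact :: "nat \<Rightarrow> qfun" where
  "qfact n = (\<Prod>i = 1..n. qint (int i))"

definition gpoly :: "nat \<Rightarrow> qfun \<Rightarrow> qfun" where
  "gpoly n x = (if even n then 1 else x) *
     (\<Prod>i = 1..n div 2. x ^ 2 - (qint (2 * int i - 1)) ^ 2)"

definition gdiv :: "nat \<Rightarrow> qfun \<Rightarrow> qfun" where
  "gdiv n x = gpoly n x / qfact n"

definition laurent_int :: "qfun set" where
  "laurent_int = {Fract p 1 * qvar powi k | p k. True}"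

end

theory Submission
  imports Defs
begin

text \<open>
  For x = [2l - 1] the identity [a]^2 - [b]^2 = [a - b] [a + b] gives
  x^2 - [2i - 1]^2 = [2(l - i)] [2(l + i - 1)], so g_2m(x) is the product
  [2(s + 1)] ... [2(s + 2m)] of 2m consecutive even quantum integers, where s = l - m - 1.
  The quotient of N such consecutive factors by [N]! satisfies a q-Pascal type recursion
  in (s, N) with Laurent polynomial coefficients, and it vanishes for s = -1 because the
  factor [0] occurs; so it is a Laurent polynomial by induction on N and two-sided
  induction on s. In the odd case [2l - 1] is a Laurent combination of [2(l + m)] and
  [2m + 1], which expresses g^(2m+1)(x) through two such quotients.
\<close>

lemma qvar_nonzero [simp]: "qvar \<noteq> 0"
  by (simp add: qvar_def Zero_fract_def eq_fract)

lemma qvar_power: "qvar ^ n = Fract ([:0, 1:] ^ n) 1"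
  by (induction n) (simp_all add: qvar_def One_fract_def)

lemma qvar_power_eq_1_iff: "qvar ^ n = 1 \<longleftrightarrow> n = 0"
proof
  assume "qvar ^ n = 1"
  then have "([:0, 1:] ^ n :: int poly) = 1"
    by (simp add: qvar_power One_fract_def eq_fract)
  then have "degree ([:0, 1:] ^ n :: int poly) = 0" by simp
  then show "n = 0" by (simp add: degree_power_eq)
qed simp

lemma qvar_powi_eq_1_iff: "qvar powi k = 1 \<longleftrightarrow> k = 0"
proof (cases "k \<ge> 0")
  case True
  then show ?thesis
    using qvar_power_eq_1_iff[of "nat k"] by (simp add: power_int_def)
next
  case False
  then show ?thesis
    using qvar_power_eq_1_iff[of "nat (- k)"] by (simp add: power_int_def power_inverse)
qed

lemma qint_denom_nonzero: "qvar - inverse qvar \<noteq> 0"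
proof
  assume "qvar - inverse qvar = 0"
  then have "qvar ^ 2 = 1" by (simp add: field_simps power2_eq_square)
  then show False by (simp add: qvar_power_eq_1_iff)
qed

lemma qint_altdef: "qint a = (qvar powi a - inverse (qvar powi a)) / (qvar - inverse qvar)"
  by (simp add: qint_def power_int_minus)

lemma qint_eq_0_iff: "qint a = 0 \<longleftrightarrow> a = 0"
proof -
  have "qint a = 0 \<longleftrightarrow> qvar powi a * qvar powi a = 1"
    using qint_denom_nonzero by (auto simp: qint_altdef field_simps)
  also have "\<dots> \<longleftrightarrow> a = 0"
    by (simp add: power_int_add[symmetric] qvar_powi_eq_1_iff)
  finally show ?thesis .
qed

lemma qvar_powi_add: "qvar powi (a + b) = qvar powi a * qvar powi b"
  by (simp add: power_int_add)

lemma qint_add: "qint (a + b) = qvar powi b * qint a + qvar powi (- a) * qint b"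
proof -
  have "(u * v - inverse (u * v)) / d = v * ((u - inverse u) / d) + inverse u * ((v - inverse v) / d)"
    if "u \<noteq> 0" "v \<noteq> 0" "d \<noteq> 0" for u v d :: qfun
    using that by (simp add: field_simps)
  then show ?thesis
    unfolding qint_altdef qvar_powi_add power_int_minus using qint_denom_nonzero by simp
qed

lemma qint_uminus: "qint (- a) = - qint a"
  using qint_denom_nonzero by (simp add: qint_altdef power_int_minus field_simps)

lemma qint_double: "qint (2 * a) = qint a * (qvar powi a + qvar powi (- a))"
  using qint_add[of a a] by (simp add: mult_2 algebra_simps)

lemma qint_square_diff: "qint a ^ 2 - qint b ^ 2 = qint (a - b) * qint (a + b)"
proof -
  have "((u - inverse u) / d) ^ 2 - ((v - inverse v) / d) ^ 2 =
    ((u * inverse v - inverse (u * inverse v)) / d) * ((u * v - inverse (u * v)) / d)"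
    if "u \<noteq> 0" "v \<noteq> 0" "d \<noteq> 0" for u v d :: qfun
    using that by (simp add: field_simps power2_eq_square)
  moreover have "qvar powi (a - b) = qvar powi a * inverse (qvar powi b)"
    by (simp add: power_int_diff divide_inverse)
  ultimately show ?thesis
    unfolding qint_altdef qvar_powi_add using qint_denom_nonzero by simp
qed

lemma qfact_Suc: "qfact (Suc n) = qfact n * qint (int (Suc n))"
  by (simp add: qfact_def)

lemma qfact_nonzero: "qfact n \<noteq> 0"
  by (simp add: qfact_def qint_eq_0_iff)

lemma laurent_intI: "Fract p 1 * qvar powi k \<in> laurent_int"
  unfolding laurent_int_def by blast

lemma laurent_intE:
  assumes "x \<in> laurent_int"
  obtains p k where "x = Fract p 1 * qvar powi k"
  using assms unfolding laurent_int_def by blast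

lemma qvar_powi_in_laurent_int: "qvar powi k \<in> laurent_int"
  using laurent_intI[of 1 k] by (simp add: One_fract_def [symmetric])

lemma one_in_laurent_int: "1 \<in> laurent_int"
  using qvar_powi_in_laurent_int[of 0] by simp

lemma zero_in_laurent_int: "0 \<in> laurent_int"
  using laurent_intI[of 0 0] by (simp add: Zero_fract_def)

lemma laurent_int_mult:
  assumes "x \<in> laurent_int" "y \<in> laurent_int"
  shows "x * y \<in> laurent_int"
proof -
  obtain p a where x: "x = Fract p 1 * qvar powi a" using assms(1) by (rule laurent_intE)
  obtain r b where y: "y = Fract r 1 * qvar powi b" using assms(2) by (rule laurent_intE)
  have "x * y = Fract (p * r) 1 * qvar powi (a + b)"
    by (simp add: x y qvar_powi_add mult_ac)
  then show ?thesis by (simp add: laurent_intI)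
qed

lemma laurent_int_uminus:
  assumes "x \<in> laurent_int"
  shows "- x \<in> laurent_int"
proof -
  obtain p a where x: "x = Fract p 1 * qvar powi a" using assms by (rule laurent_intE)
  have "- x = Fract (- p) 1 * qvar powi a" by (simp only: x minus_mult_left minus_fract)
  then show ?thesis by (simp add: laurent_intI)
qed

lemma qvar_powi_shift:
  assumes "m \<le> a"
  shows "qvar powi a = Fract ([:0, 1:] ^ nat (a - m)) 1 * qvar powi m"
proof -
  have "qvar powi a = qvar powi (int (nat (a - m)) + m)"
    using assms by simp
  then show ?thesis by (simp only: qvar_powi_add power_int_of_nat qvar_power)
qed

lemma laurent_int_add:
  assumes "x \<in> laurent_int" "y \<in> laurent_int"
  shows "x + y \<in> laurent_int"
proof -
  obtain p a where x: "x = Fract p 1 * qvar powi a" using assms(1) by (rule laurent_intE)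
  obtain r b where y: "y = Fract r 1 * qvar powi b" using assms(2) by (rule laurent_intE)
  define m where "m = min a b"
  have "x = Fract (p * [:0, 1:] ^ nat (a - m)) 1 * qvar powi m"
    using qvar_powi_shift[of m a] by (simp add: x m_def mult.assoc)
  moreover have "y = Fract (r * [:0, 1:] ^ nat (b - m)) 1 * qvar powi m"
    using qvar_powi_shift[of m b] by (simp add: y m_def mult.assoc)
  ultimately have "x + y = Fract (p * [:0, 1:] ^ nat (a - m) + r * [:0, 1:] ^ nat (b - m)) 1 * qvar powi m"
    by (simp only: distrib_right [symmetric]) simp
  then show ?thesis by (simp add: laurent_intI)
qed

lemma laurent_int_diff: "x \<in> laurent_int \<Longrightarrow> y \<in> laurent_int \<Longrightarrow> x - y \<in> laurent_int"
  using laurent_int_add[OF _ laurent_int_uminus, of x y] by simp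

fun qeven_prod :: "int \<Rightarrow> nat \<Rightarrow> qfun" where
  "qeven_prod s 0 = 1"
| "qeven_prod s (Suc N) = qeven_prod s N * qint (2 * (s + int N + 1))"

lemma qeven_prod_Suc_left: "qeven_prod s (Suc N) = qint (2 * (s + 1)) * qeven_prod (s + 1) N"
  by (induction N) (simp_all add: algebra_simps)

definition qeven_quot :: "int \<Rightarrow> nat \<Rightarrow> qfun" where
  "qeven_quot s N = qeven_prod s N / qfact N"

lemma qeven_quot_rec:
  "qeven_quot s (Suc N) =
     qvar powi (2 * int (Suc N)) * qeven_quot (s - 1) (Suc N)
     + qvar powi (- 2 * s) * (qvar powi (int (Suc N)) + qvar powi (- int (Suc N))) * qeven_quot s N"
proof -
  have "qint (2 * s + 2 * int (Suc N)) =
      qvar powi (2 * int (Suc N)) * qint (2 * s)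
      + qvar powi (- 2 * s) * (qint (int (Suc N)) * (qvar powi (int (Suc N)) + qvar powi (- int (Suc N))))"
    unfolding qint_add qint_double by simp
  moreover have "qeven_prod (s - 1) (Suc N) = qint (2 * s) * qeven_prod s N"
    using qeven_prod_Suc_left[of "s - 1"] by simp
  moreover have "qint (int (Suc N)) \<noteq> 0"
    by (simp add: qint_eq_0_iff)
  ultimately show ?thesis
    using qfact_nonzero[of N]
    by (simp add: qeven_quot_def qfact_Suc algebra_simps) (simp add: field_simps)
qed

lemma qeven_quot_in_laurent_int: "qeven_quot s N \<in> laurent_int"
proof (induction N arbitrary: s)
  case 0
  show ?case by (simp add: qeven_quot_def qfact_def one_in_laurent_int)
next
  case (Suc N)
  define Z where "Z = qvar powi (int (Suc N)) + qvar powi (- int (Suc N))"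
  have Z: "Z \<in> laurent_int"
    unfolding Z_def by (intro laurent_int_add qvar_powi_in_laurent_int)
  have rec: "qeven_quot s (Suc N) =
      qvar powi (2 * int (Suc N)) * qeven_quot (s - 1) (Suc N) + qvar powi (- 2 * s) * Z * qeven_quot s N"
    for s
    unfolding Z_def by (rule qeven_quot_rec)
  show ?case
  proof (induction s rule: int_induct [where k = "- 1"])
    case base
    show ?case
      by (simp only: qeven_quot_def qeven_prod_Suc_left) (simp add: qint_def zero_in_laurent_int)
  next
    case (step1 i)
    show ?case
      using rec [of "i + 1"]
      by (simp del: of_nat_Suc) (intro laurent_int_add laurent_int_mult qvar_powi_in_laurent_int Z step1.IH Suc.IH)
  next
    case (step2 i)
    have "qeven_quot (i - 1) (Suc N) =
        qvar powi (- 2 * int (Suc N)) * (qeven_quot i (Suc N) - qvar powi (- 2 * i) * Z * qeven_quot i N)"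
      unfolding rec [of i] by (simp add: power_int_minus field_simps del: of_nat_Suc)
    then show ?case
      by (simp del: of_nat_Suc) (intro laurent_int_diff laurent_int_mult qvar_powi_in_laurent_int Z step2.IH Suc.IH)
  qed
qed

lemma qeven_prod_Suc_Suc_both:
  "qeven_prod (s - 1) (Suc (Suc N)) = qint (2 * s) * qeven_prod s N * qint (2 * (s + int N + 1))"
  by (subst qeven_prod_Suc_left) (simp add: mult_ac)

lemma prod_qint_square_diff:
  "(\<Prod>i = 1..m. qint (2 * l - 1) ^ 2 - qint (2 * int i - 1) ^ 2) = qeven_prod (l - int m - 1) (2 * m)"
proof (induction m)
  case 0
  show ?case by simp
next
  case (Suc m)
  define s where "s = l - int m - 1"
  have "qint (2 * l - 1) ^ 2 - qint (2 * int (Suc m) - 1) ^ 2 = qint (2 * s) * qint (2 * (s + int (2 * m) + 1))"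
    unfolding qint_square_diff s_def by (simp add: algebra_simps)
  moreover have "qeven_prod (l - int (Suc m) - 1) (2 * Suc m) = qeven_prod (s - 1) (Suc (Suc (2 * m)))"
    by (rule arg_cong2 [where f = qeven_prod]) (simp_all add: s_def)
  ultimately show ?case
    unfolding qeven_prod_Suc_Suc_both using Suc.IH by (simp add: s_def mult_ac)
qed

lemma qint_mult_qeven_prod_div_qfact_in_laurent_int:
  "qint (2 * s + int N + 1) * qeven_prod s N / qfact (Suc N) \<in> laurent_int"
proof -
  have qint_odd: "qint (2 * s + int N + 1) = qvar powi (- int (Suc N)) * qint (2 * (s + int N + 1))
      - qvar powi (- 2 * (s + int N + 1)) * qint (int (Suc N))"
    using qint_add [of "2 * (s + int N + 1)" "- int (Suc N)"] qint_uminus [of "int (Suc N)"]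
    by (simp add: algebra_simps)
  have "qint (2 * s + int N + 1) * qeven_prod s N / qfact (Suc N) =
      qvar powi (- int (Suc N)) * qeven_quot s (Suc N) - qvar powi (- 2 * (s + int N + 1)) * qeven_quot s N"
    using qfact_nonzero [of N] qint_eq_0_iff [of "int (Suc N)"]
    unfolding qint_odd qeven_quot_def qfact_Suc qeven_prod.simps(2) by (simp add: field_simps del: of_nat_Suc)
  then show ?thesis
    by (simp only:) (intro laurent_int_diff laurent_int_mult qvar_powi_in_laurent_int qeven_quot_in_laurent_int)
qed

theorem lemma4p3:
  fixes l :: int and n :: nat
  shows "gdiv n (qint (2 * l - 1)) \<in> laurent_int"
proof -
  define m where "m = n div 2"
  define s where "s = l - int m - 1"
  have gpoly: "gpoly n (qint (2 * l - 1)) = (if even n then 1 else qint (2 * l - 1)) * qeven_prod s (2 * m)"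
    unfolding gpoly_def s_def m_def prod_qint_square_diff ..
  show ?thesis
  proof (cases "even n")
    case True
    then have "gdiv n (qint (2 * l - 1)) = qeven_quot s (2 * m)"
      by (simp add: gdiv_def gpoly qeven_quot_def m_def)
    then show ?thesis
      by (simp add: qeven_quot_in_laurent_int)
  next
    case False
    then have "n = Suc (2 * m)"
      unfolding m_def by simp
    then have "gdiv n (qint (2 * l - 1)) = qint (2 * s + int (2 * m) + 1) * qeven_prod s (2 * m) / qfact (Suc (2 * m))"
      using False unfolding gdiv_def gpoly by (simp del: of_nat_Suc) (simp add: s_def)
    then show ?thesis
      by (simp only: qint_mult_qeven_prod_div_qfact_in_laurent_int)
  qed
qed

end
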